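(* Let $B$ be a finite connected graph of positive order without half-loops. Let $s\ge1$, let $\vec m=(m_1,\dots,m_s)$ and $\vec k_0=(k_1^0,\dots,k_s^0)$ be $s$-tuples of positive integers, and let $g_1,\dots,g_s$ be $B$-Ramanujan functions. Then the truncated weighted convolution $(g_1\ast\cdots\ast g_s)^{\vec k_0}_{\vec m}$ is a $B$-Ramanujan function.
   Context: Graphs may have multiple edges and whole-loops; order is $|E|-|V|$. $H_B$ is the Hashimoto matrix of $B$ (indexed by directed edges, $(e,e')$ entry $1$ iff $h(e)=t(e')$ and $e'\ne e^{-1}$), $\rho$ spectral radius. A function $P$ on nonnegative integers is $B$-Ramanujan if $P(k)=\sum_{\mu\in\mathrm{Spec}(H_B)}\mu^kp_\mu(k)+e(k)$ with polynomials $p_\mu$, and for every $\epsilon>0$ there is $C$ with $|e(k)|\le C(\rho(H_B)+\epsilon)^{k/2}$ for all $k$. The truncated weighted convolution is $(g_1\ast\cdots\ast g_s)^{\vec k_0}_{\vec m}(k)=\sum g_1(k_1)\cdots g_s(k_s)$, the sum over all integer vectors $\vec k=(k_1,\dots,k_s)$ with $k_i\ge k_i^0$ and $\sum_im_ik_i=k$. *)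

theory Defs
  imports "HOL-Analysis.Analysis" "HOL-Computational_Algebra.Polynomial"
begin

text \<open>A finite graph B (multiple edges and whole-loops allowed) is given by its
set of directed edges, the finite type 'd, its vertex set, the finite type 'v,
tail and head maps tail, head :: 'd => 'v and the edge reversal rv :: 'd => 'd.
Every undirected edge corresponds to the pair {e, rv e}.\<close>

definition graph :: "('d::finite \<Rightarrow> 'v::finite) \<Rightarrow> ('d \<Rightarrow> 'v) \<Rightarrow> ('d \<Rightarrow> 'd) \<Rightarrow> bool" where
  "graph tail head rv \<longleftrightarrow> (\<forall>e. rv (rv e) = e \<and> tail (rv e) = head e)"

definition no_half_loops :: "('d \<Rightarrow> 'd) \<Rightarrow> bool" where
  "no_half_loops rv \<longleftrightarrow> (\<forall>e. rv e \<noteq> e)"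

definition connected_graph :: "('d::finite \<Rightarrow> 'v::finite) \<Rightarrow> ('d \<Rightarrow> 'v) \<Rightarrow> bool" where
  "connected_graph tail head \<longleftrightarrow> (\<forall>u v. (u, v) \<in> (range (\<lambda>e. (tail e, head e)))\<^sup>*)"

text \<open>Order |E| - |V|, with |E| = (number of directed edges) / 2.\<close>
definition graph_order :: "('d::finite \<Rightarrow> 'v::finite) \<Rightarrow> int" where
  "graph_order tail = int (CARD('d) div 2) - int CARD('v)"

definition hashimoto :: "('d::finite \<Rightarrow> 'v) \<Rightarrow> ('d \<Rightarrow> 'v) \<Rightarrow> ('d \<Rightarrow> 'd) \<Rightarrow> complex^'d^'d" where
  "hashimoto tail head rv = (\<chi> e e'. if head e = tail e' \<and> e' \<noteq> rv e then 1 else 0)"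

definition mat_spectrum :: "complex^'n^'n \<Rightarrow> complex set" where
  "mat_spectrum A = {\<mu>. \<exists>v. v \<noteq> 0 \<and> A *v v = \<mu> *s v}"

definition spectral_rad :: "complex^'n^'n \<Rightarrow> real" where
  "spectral_rad A = Max (norm ` mat_spectrum A)"

definition B_ramanujan ::
  "('d::finite \<Rightarrow> 'v::finite) \<Rightarrow> ('d \<Rightarrow> 'v) \<Rightarrow> ('d \<Rightarrow> 'd) \<Rightarrow> (nat \<Rightarrow> complex) \<Rightarrow> bool" where
  "B_ramanujan tail head rv P \<longleftrightarrow>
     (let H = hashimoto tail head rv in
      \<exists>p :: complex \<Rightarrow> complex poly. \<exists>err :: nat \<Rightarrow> complex.
        (\<forall>k. P k = (\<Sum>\<mu>\<in>mat_spectrum H. \<mu> ^ k * poly (p \<mu>) (of_nat k)) + err k) \<and>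
        (\<forall>\<epsilon>>0. \<exists>C. \<forall>k. norm (err k) \<le> C * (spectral_rad H + \<epsilon>) powr (real k / 2)))"

text \<open>Truncated weighted convolution of g 0, ..., g (s-1) with weights m and lower
bounds k0 (tuples are represented as functions on {..<s}).\<close>
definition trunc_conv ::
  "nat \<Rightarrow> (nat \<Rightarrow> nat \<Rightarrow> complex) \<Rightarrow> (nat \<Rightarrow> nat) \<Rightarrow> (nat \<Rightarrow> nat) \<Rightarrow> nat \<Rightarrow> complex" where
  "trunc_conv s g k0 m k =
     (\<Sum>kv \<in> {kv. (\<forall>i<s. k0 i \<le> kv i) \<and> (\<forall>i\<ge>s. kv i = 0) \<and> (\<Sum>i<s. m i * kv i) = k}.
        \<Prod>i<s. g i (kv i))"

end

theory Submission
  imports Defs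
begin

text \<open>Let \<open>\<Lambda>\<close> be the spectrum of \<open>H\<^sub>B\<close> and \<open>r = \<surd>\<rho>(H\<^sub>B)\<close>. Call a sequence small if it is
  \<open>O(s\<^sup>k)\<close> for every \<open>s > r\<close>; \<open>B\<close>-Ramanujan functions are then the sums of exponential
  polynomials \<open>\<mu>\<^sup>k p(k)\<close>, \<open>\<mu> \<in> \<Lambda>\<close>, and a small sequence. They form a vector space closed under
  shifts and under discrete integration: if \<open>f(k + 1) - \<mu> f(k)\<close> is Ramanujan with \<open>\<mu> \<in> \<Lambda>\<close>,
  so is \<open>f\<close>, because \<open>\<nu> q(x + 1) - \<mu> q(x)\<close> is onto the polynomials and the recursion driven
  by a small sequence has a small solution up to a multiple of \<open>\<mu>\<^sup>k\<close>.

  The truncated weighted convolution is an iterated Cauchy product of the \<open>g\<^sub>i\<close> dilated by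
  \<open>m\<^sub>i\<close>. A dilation by \<open>m \<ge> 2\<close> of a Ramanujan sequence is small, since \<open>g(b) = O(s\<^sup>2\<^sup>b)\<close>
  and \<open>s \<ge> 1\<close>; here the positive order is used, through the eigenvalue \<open>1\<close> of \<open>H\<^sub>B\<close> whose
  eigenvector is a nonzero circulation, giving \<open>\<rho> \<ge> 1\<close>. The Cauchy product of Ramanujan
  sequences is Ramanujan by induction on the degree of \<open>p\<close> in \<open>\<mu>\<^sup>k p(k)\<close>: the difference
  \<open>f(k + 1) - \<mu> f(k)\<close> of the product with \<open>\<mu>\<^sup>k p(k)\<close> is the product with an exponential
  polynomial of lower degree plus a shift of the other factor.\<close>

section \<open>Exponential polynomials\<close>

lemma linear_times_power_le_power:
  fixes a b :: real
  assumes "0 \<le> a" "a < b"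
  shows "\<exists>C. \<forall>k. (real k + 1) * a ^ k \<le> C * b ^ k"
proof (cases "a = 0")
  case True
  with assms show ?thesis
    by (intro exI[of _ 1] allI) (auto simp: power_0_left)
next
  case False
  with assms have a: "a > 0" by simp
  define d where "d = b / a - 1"
  have d: "d > 0" and b: "b = a * (1 + d)"
    using assms a by (simp_all add: d_def field_simps)
  define c where "c = min 1 d"
  have c: "0 < c" "c \<le> 1" "c \<le> d" using d by (auto simp: c_def)
  show ?thesis
  proof (intro exI[of _ "1 / c"] allI)
    fix k
    have "c * (real k + 1) \<le> 1 + real k * d"
      using c mult_right_mono[OF c(3), of "real k"] by (simp add: algebra_simps)
    also have "\<dots> \<le> (1 + d) ^ k"
      using Bernoulli_inequality[of d k] d by simp
    finally have "real k + 1 \<le> (1 + d) ^ k / c"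
      using c by (simp add: field_simps)
    then have "(real k + 1) * a ^ k \<le> (1 + d) ^ k / c * a ^ k"
      using a by (intro mult_right_mono) auto
    also have "\<dots> = 1 / c * b ^ k"
      by (simp add: b power_mult_distrib)
    finally show "(real k + 1) * a ^ k \<le> 1 / c * b ^ k" .
  qed
qed

lemma power_bound_nonneg:
  assumes "\<And>k. norm (f k) \<le> C * (s::real) ^ k"
  shows "0 \<le> C"
  using assms[of 0] norm_ge_zero[of "f 0"] by (simp del: norm_ge_zero)

lemma poly_times_power_le_power:
  fixes p :: "complex poly" and t s :: real
  assumes "0 \<le> t" "t < s"
  shows "\<exists>C. \<forall>k. norm (poly p (of_nat k)) * t ^ k \<le> C * s ^ k"
  using assms
proof (induction p arbitrary: t s rule: pCons_induct)
  case 0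
  then show ?case by (intro exI[of _ 0]) auto
next
  case (pCons a p)
  define s' where "s' = (t + s) / 2"
  have s': "t < s'" "s' < s" "0 \<le> s'" using pCons.prems by (auto simp: s'_def)
  obtain C1 where C1: "\<And>k. norm (poly p (of_nat k)) * t ^ k \<le> C1 * s' ^ k"
    using pCons.IH[OF pCons.prems(1) s'(1)] by blast
  have "0 \<le> C1" using C1[of 0] by (simp add: order_trans[OF norm_ge_zero])
  obtain C2 where C2: "\<And>k. (real k + 1) * s' ^ k \<le> C2 * s ^ k"
    using linear_times_power_le_power[OF s'(3) s'(2)] by blast
  show ?case
  proof (intro exI[of _ "norm a + C1 * C2"] allI)
    fix k
    have tk: "t ^ k \<le> s ^ k" using pCons.prems by (intro power_mono) auto
    have "norm (poly (pCons a p) (of_nat k)) \<le> norm a + real k * norm (poly p (of_nat k))"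
      by (simp add: norm_triangle_le norm_mult)
    then have "norm (poly (pCons a p) (of_nat k)) * t ^ k
        \<le> (norm a + real k * norm (poly p (of_nat k))) * t ^ k"
      using pCons.prems by (intro mult_right_mono) auto
    also have "\<dots> = norm a * t ^ k + real k * (norm (poly p (of_nat k)) * t ^ k)"
      by (simp add: algebra_simps)
    also have "\<dots> \<le> norm a * s ^ k + real k * (C1 * s' ^ k)"
      using tk C1[of k] by (intro add_mono mult_left_mono) auto
    also have "\<dots> \<le> norm a * s ^ k + C1 * ((real k + 1) * s' ^ k)"
      using \<open>0 \<le> C1\<close> s' by (simp add: algebra_simps)
    also have "\<dots> \<le> norm a * s ^ k + C1 * (C2 * s ^ k)"
      using \<open>0 \<le> C1\<close> C2[of k] by (intro add_mono mult_left_mono) auto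
    finally show "norm (poly (pCons a p) (of_nat k)) * t ^ k \<le> (norm a + C1 * C2) * s ^ k"
      by (simp add: algebra_simps)
  qed
qed

definition exp_poly :: "complex \<Rightarrow> complex poly \<Rightarrow> nat \<Rightarrow> complex" where
  "exp_poly \<mu> p k = \<mu> ^ k * poly p (of_nat k)"

lemma exp_poly_add: "exp_poly \<mu> (p + q) k = exp_poly \<mu> p k + exp_poly \<mu> q k"
  by (simp add: exp_poly_def algebra_simps)

lemma exp_poly_smult: "exp_poly \<mu> (smult c p) k = c * exp_poly \<mu> p k"
  by (simp add: exp_poly_def algebra_simps)

lemma exp_poly_Suc: "exp_poly \<mu> p (Suc k) = exp_poly \<mu> (smult \<mu> (p \<circ>\<^sub>p [:1, 1:])) k"
  by (simp add: exp_poly_def poly_pcompose algebra_simps)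

section \<open>Small and Ramanujan sequences\<close>

locale ramanujan_space =
  fixes \<Lambda> :: "complex set" and r :: real
  assumes finite_\<Lambda>: "finite \<Lambda>" and r_ge_1: "1 \<le> r"
    and norm_le_r2: "\<And>\<mu>. \<mu> \<in> \<Lambda> \<Longrightarrow> norm \<mu> \<le> r\<^sup>2"
begin

definition small :: "(nat \<Rightarrow> complex) \<Rightarrow> bool" where
  "small e \<longleftrightarrow> (\<forall>s>r. \<exists>C. \<forall>k. norm (e k) \<le> C * s ^ k)"

definition ramanujan :: "(nat \<Rightarrow> complex) \<Rightarrow> bool" where
  "ramanujan f \<longleftrightarrow>
     (\<exists>p e. small e \<and> (\<forall>k. f k = (\<Sum>\<mu>\<in>\<Lambda>. exp_poly \<mu> (p \<mu>) k) + e k))"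

lemma smallD:
  assumes "small e" "r < s"
  obtains C where "\<And>k. norm (e k) \<le> C * s ^ k"
  using assms unfolding small_def by blast

lemma small_if_small_near_r:
  assumes "r < t" and near: "\<And>s. r < s \<Longrightarrow> s < t \<Longrightarrow> \<exists>C. \<forall>k. norm (e k) \<le> C * s ^ k"
  shows "small e"
  unfolding small_def
proof (intro allI impI)
  fix s assume "r < s"
  define s' where "s' = min s ((r + t) / 2)"
  have s': "r < s'" "s' < t" "s' \<le> s" using \<open>r < s\<close> \<open>r < t\<close> by (auto simp: s'_def min_def)
  obtain C where C: "\<And>k. norm (e k) \<le> C * s' ^ k" using near[OF s'(1,2)] by blast
  have "C * s' ^ k \<le> C * s ^ k" for k
    using power_bound_nonneg[OF C] s' r_ge_1 by (intro mult_left_mono power_mono) auto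
  with C show "\<exists>C. \<forall>k. norm (e k) \<le> C * s ^ k" by (meson order_trans)
qed

lemma small_if_linear_power_bound:
  assumes "\<And>s. r < s \<Longrightarrow> \<exists>C. \<forall>k. norm (e k) \<le> C * ((real k + 1) * s ^ k)"
  shows "small e"
  unfolding small_def
proof (intro allI impI)
  fix s assume s: "r < s"
  define s' where "s' = (r + s) / 2"
  have s': "r < s'" "s' < s" "0 \<le> s'" using s r_ge_1 by (auto simp: s'_def)
  obtain C where C: "\<And>k. norm (e k) \<le> C * ((real k + 1) * s' ^ k)"
    using assms[OF s'(1)] by blast
  have "0 \<le> C" using C[of 0] by (simp add: order_trans[OF norm_ge_zero])
  obtain C' where C': "\<And>k. (real k + 1) * s' ^ k \<le> C' * s ^ k"
    using linear_times_power_le_power[OF s'(3,2)] by blast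
  have "norm (e k) \<le> C * C' * s ^ k" for k
    using order_trans[OF C mult_left_mono[OF C' \<open>0 \<le> C\<close>]] by (simp add: mult.assoc)
  then show "\<exists>C. \<forall>k. norm (e k) \<le> C * s ^ k" by blast
qed

lemma small_zero: "small (\<lambda>k. 0)"
  unfolding small_def by (auto intro: exI[of _ 0])

lemma small_add:
  assumes "small e1" "small e2"
  shows "small (\<lambda>k. e1 k + e2 k)"
  unfolding small_def
proof (intro allI impI)
  fix s assume "r < s"
  obtain C1 C2 where C: "\<And>k. norm (e1 k) \<le> C1 * s ^ k" "\<And>k. norm (e2 k) \<le> C2 * s ^ k"
    using smallD[OF assms(1) \<open>r < s\<close>] smallD[OF assms(2) \<open>r < s\<close>] by metis
  have "norm (e1 k + e2 k) \<le> (C1 + C2) * s ^ k" for k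
    using norm_triangle_ineq[of "e1 k" "e2 k"] C[of k] by (simp add: distrib_right)
  then show "\<exists>C. \<forall>k. norm (e1 k + e2 k) \<le> C * s ^ k" by blast
qed

lemma small_cmult:
  assumes "small e"
  shows "small (\<lambda>k. c * e k)"
  unfolding small_def
proof (intro allI impI)
  fix s assume "r < s"
  obtain C where C: "\<And>k. norm (e k) \<le> C * s ^ k" using smallD[OF assms \<open>r < s\<close>] by blast
  have "norm (c * e k) \<le> norm c * C * s ^ k" for k
    using mult_left_mono[OF C[of k], of "norm c"] by (simp add: norm_mult mult.assoc)
  then show "\<exists>C. \<forall>k. norm (c * e k) \<le> C * s ^ k" by blast
qed

lemma small_shift: "small e \<Longrightarrow> small (\<lambda>k. e (Suc k))"
  unfolding small_def by (metis mult.assoc power_Suc)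

lemma small_finite_support:
  assumes "\<And>k. N \<le> k \<Longrightarrow> e k = 0"
  shows "small e"
  unfolding small_def
proof (intro allI impI exI[of _ "\<Sum>j<N. norm (e j)"] allI)
  fix s k assume "r < s"
  then have "1 \<le> s ^ k" using r_ge_1 by (intro one_le_power) auto
  show "norm (e k) \<le> (\<Sum>j<N. norm (e j)) * s ^ k"
  proof (cases "k < N")
    case True
    then have "norm (e k) \<le> (\<Sum>j<N. norm (e j))" by (intro member_le_sum) auto
    with \<open>1 \<le> s ^ k\<close> show ?thesis
      by (metis mult_le_cancel_left1 norm_ge_zero order.trans sum_nonneg not_le)
  next
    case False
    with assms \<open>1 \<le> s ^ k\<close> show ?thesis by (simp add: sum_nonneg)
  qed
qed

lemma small_iff_powr_bound:
  "small e \<longleftrightarrow> (\<forall>\<epsilon>>0. \<exists>C. \<forall>k. norm (e k) \<le> C * (r\<^sup>2 + \<epsilon>) powr (real k / 2))"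
proof -
  have "(r\<^sup>2 + \<epsilon>) powr (real k / 2) = sqrt (r\<^sup>2 + \<epsilon>) ^ k" if "0 < \<epsilon>" for \<epsilon> k
  proof -
    have "0 < r\<^sup>2 + \<epsilon>" using that by (simp add: add_nonneg_pos)
    then have "sqrt (r\<^sup>2 + \<epsilon>) ^ k = sqrt (r\<^sup>2 + \<epsilon>) powr real k" by (simp add: powr_realpow)
    also have "\<dots> = (r\<^sup>2 + \<epsilon>) powr (real k / 2)"
      using \<open>0 < r\<^sup>2 + \<epsilon>\<close> by (simp add: powr_half_sqrt[symmetric] powr_powr)
    finally show ?thesis ..
  qed
  then have "(\<forall>\<epsilon>>0. \<exists>C. \<forall>k. norm (e k) \<le> C * (r\<^sup>2 + \<epsilon>) powr (real k / 2))
      \<longleftrightarrow> (\<forall>\<epsilon>>0. \<exists>C. \<forall>k. norm (e k) \<le> C * sqrt (r\<^sup>2 + \<epsilon>) ^ k)"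
    by simp
  also have "\<dots> \<longleftrightarrow> small e"
    unfolding small_def
  proof safe
    fix s assume bound: "\<forall>\<epsilon>>0. \<exists>C. \<forall>k. norm (e k) \<le> C * sqrt (r\<^sup>2 + \<epsilon>) ^ k" and "r < s"
    then have "0 < s\<^sup>2 - r\<^sup>2" "sqrt (r\<^sup>2 + (s\<^sup>2 - r\<^sup>2)) = s"
      using r_ge_1 by (auto intro: power_strict_mono)
    then show "\<exists>C. \<forall>k. norm (e k) \<le> C * s ^ k" using bound by metis
  next
    fix \<epsilon> :: real assume "\<forall>s>r. \<exists>C. \<forall>k. norm (e k) \<le> C * s ^ k" "0 < \<epsilon>"
    moreover have "r < sqrt (r\<^sup>2 + \<epsilon>)" using \<open>0 < \<epsilon>\<close> r_ge_1 real_less_rsqrt by simp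
    ultimately show "\<exists>C. \<forall>k. norm (e k) \<le> C * sqrt (r\<^sup>2 + \<epsilon>) ^ k" by blast
  qed
  finally show ?thesis ..
qed

lemma ramanujanE:
  assumes "ramanujan f"
  obtains p e where "small e" "\<And>k. f k = (\<Sum>\<mu>\<in>\<Lambda>. exp_poly \<mu> (p \<mu>) k) + e k"
  using assms unfolding ramanujan_def by blast

lemma ramanujan_small: "small e \<Longrightarrow> ramanujan e"
  unfolding ramanujan_def by (intro exI[of _ "\<lambda>_. 0"] exI[of _ e]) (simp add: exp_poly_def)

lemma ramanujan_add_small:
  assumes "ramanujan f" "small e"
  shows "ramanujan (\<lambda>k. f k + e k)"
proof -
  obtain p e' where "small e'" "\<And>k. f k = (\<Sum>\<mu>\<in>\<Lambda>. exp_poly \<mu> (p \<mu>) k) + e' k"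
    using assms(1) ramanujanE by blast
  then show ?thesis
    unfolding ramanujan_def using small_add[OF _ assms(2)] by (auto simp: add.assoc)
qed

lemma ramanujan_zero: "ramanujan (\<lambda>k. 0)"
  by (rule ramanujan_small[OF small_zero])

lemma ramanujan_add:
  assumes "ramanujan f" "ramanujan g"
  shows "ramanujan (\<lambda>k. f k + g k)"
proof -
  obtain p1 e1 where 1: "small e1" "\<And>k. f k = (\<Sum>\<mu>\<in>\<Lambda>. exp_poly \<mu> (p1 \<mu>) k) + e1 k"
    using assms(1) ramanujanE by blast
  obtain p2 e2 where 2: "small e2" "\<And>k. g k = (\<Sum>\<mu>\<in>\<Lambda>. exp_poly \<mu> (p2 \<mu>) k) + e2 k"
    using assms(2) ramanujanE by blast
  show ?thesis
    unfolding ramanujan_def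
    by (intro exI[of _ "\<lambda>\<mu>. p1 \<mu> + p2 \<mu>"] exI[of _ "\<lambda>k. e1 k + e2 k"] conjI small_add 1 2 allI)
       (simp add: 1 2 exp_poly_add sum.distrib)
qed

lemma ramanujan_cmult:
  assumes "ramanujan f"
  shows "ramanujan (\<lambda>k. c * f k)"
proof -
  obtain p e where pe: "small e" "\<And>k. f k = (\<Sum>\<mu>\<in>\<Lambda>. exp_poly \<mu> (p \<mu>) k) + e k"
    using assms ramanujanE by blast
  show ?thesis
    unfolding ramanujan_def
    by (intro exI[of _ "\<lambda>\<mu>. smult c (p \<mu>)"] exI[of _ "\<lambda>k. c * e k"] conjI small_cmult pe allI)
       (simp add: pe exp_poly_smult sum_distrib_left algebra_simps)
qed

lemma ramanujan_sum:
  "finite I \<Longrightarrow> (\<And>i. i \<in> I \<Longrightarrow> ramanujan (f i)) \<Longrightarrow> ramanujan (\<lambda>k. \<Sum>i\<in>I. f i k)"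
  by (induction I rule: finite_induct) (simp_all add: ramanujan_zero ramanujan_add)

lemma ramanujan_exp_poly:
  assumes "\<mu> \<in> \<Lambda>"
  shows "ramanujan (exp_poly \<mu> p)"
  unfolding ramanujan_def
proof (intro exI[of _ "\<lambda>\<nu>. if \<nu> = \<mu> then p else 0"] exI[of _ "\<lambda>k. 0"] conjI small_zero allI)
  fix k
  have "(\<Sum>\<nu>\<in>\<Lambda>. exp_poly \<nu> (if \<nu> = \<mu> then p else 0) k) = (\<Sum>\<nu>\<in>\<Lambda>. if \<nu> = \<mu> then exp_poly \<mu> p k else 0)"
    by (intro sum.cong) (auto simp: exp_poly_def)
  also have "\<dots> = exp_poly \<mu> p k" using assms finite_\<Lambda> by simp
  finally show "exp_poly \<mu> p k = (\<Sum>\<nu>\<in>\<Lambda>. exp_poly \<nu> (if \<nu> = \<mu> then p else 0) k) + 0" by simp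
qed

lemma ramanujan_shift:
  assumes "ramanujan f"
  shows "ramanujan (\<lambda>k. f (Suc k))"
proof -
  obtain p e where pe: "small e" "\<And>k. f k = (\<Sum>\<mu>\<in>\<Lambda>. exp_poly \<mu> (p \<mu>) k) + e k"
    using assms ramanujanE by blast
  show ?thesis
    unfolding ramanujan_def
    by (intro exI[of _ "\<lambda>\<mu>. smult \<mu> (p \<mu> \<circ>\<^sub>p [:1, 1:])"] exI[of _ "\<lambda>k. e (Suc k)"]
          conjI small_shift pe allI)
       (simp add: pe exp_poly_Suc)
qed

text \<open>The summand of eigenvalue \<open>0\<close> is supported on \<open>{0}\<close>, so it can be moved into the
  small part.\<close>
lemma ramanujanE_zero_at_0:
  assumes "ramanujan f"
  obtains p e where "small e" "p 0 = 0" "\<And>k. f k = (\<Sum>\<mu>\<in>\<Lambda>. exp_poly \<mu> (p \<mu>) k) + e k"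
proof -
  obtain p e where pe: "small e" "\<And>k. f k = (\<Sum>\<mu>\<in>\<Lambda>. exp_poly \<mu> (p \<mu>) k) + e k"
    using assms ramanujanE by blast
  define z where "z k = (if 0 \<in> \<Lambda> then exp_poly 0 (p 0) k else 0)" for k
  have "small z"
    using small_finite_support[of 1 z] by (auto simp: z_def exp_poly_def)
  have "(\<Sum>\<mu>\<in>\<Lambda>. exp_poly \<mu> (p \<mu>) k) = (\<Sum>\<mu>\<in>\<Lambda>. exp_poly \<mu> ((p(0 := 0)) \<mu>) k) + z k" for k
    using finite_\<Lambda> by (cases "0 \<in> \<Lambda>") (auto simp: z_def exp_poly_def sum.remove intro!: sum.cong)
  with pe small_add[OF \<open>small z\<close> pe(1)] show thesis
    by (intro that[of "\<lambda>k. z k + e k" "p(0 := 0)"]) (auto simp: add.assoc)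
qed

lemma ramanujan_power_bound:
  assumes "ramanujan f" "r < s"
  obtains C where "\<And>k. norm (f k) \<le> C * (s\<^sup>2) ^ k"
proof -
  obtain p e where pe: "small e" "\<And>k. f k = (\<Sum>\<mu>\<in>\<Lambda>. exp_poly \<mu> (p \<mu>) k) + e k"
    using assms(1) ramanujanE by blast
  have "1 \<le> s" "r\<^sup>2 < s\<^sup>2" using assms(2) r_ge_1 by (auto intro!: power_strict_mono)
  have "\<exists>C. \<forall>k. norm (exp_poly \<mu> (p \<mu>) k) \<le> C * (s\<^sup>2) ^ k" if "\<mu> \<in> \<Lambda>" for \<mu>
  proof -
    have "norm \<mu> < s\<^sup>2" using norm_le_r2[OF that] \<open>r\<^sup>2 < s\<^sup>2\<close> by simp
    then show ?thesis
      using poly_times_power_le_power[of "norm \<mu>" "s\<^sup>2" "p \<mu>"]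
      by (simp add: exp_poly_def norm_mult norm_power mult.commute)
  qed
  then obtain Cp where Cp: "\<And>\<mu> k. \<mu> \<in> \<Lambda> \<Longrightarrow> norm (exp_poly \<mu> (p \<mu>) k) \<le> Cp \<mu> * (s\<^sup>2) ^ k"
    by metis
  obtain Ce where Ce: "\<And>k. norm (e k) \<le> Ce * s ^ k" using smallD[OF pe(1) assms(2)] by blast
  have "norm (e k) \<le> Ce * (s\<^sup>2) ^ k" for k
    using power_bound_nonneg[OF Ce] \<open>1 \<le> s\<close>
    by (intro order_trans[OF Ce] mult_left_mono power_mono) (auto simp: power2_eq_square)
  then have "norm (f k) \<le> ((\<Sum>\<mu>\<in>\<Lambda>. Cp \<mu>) + Ce) * (s\<^sup>2) ^ k" for k
    unfolding pe(2) distrib_right sum_distrib_right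
    by (intro order_trans[OF norm_triangle_ineq] add_mono order_trans[OF norm_sum] sum_mono Cp)
  then show thesis by (rule that)
qed

end

section \<open>Discrete integration\<close>

definition shift_diff :: "complex \<Rightarrow> complex \<Rightarrow> complex poly \<Rightarrow> complex poly" where
  "shift_diff \<nu> \<mu> q = smult \<nu> (q \<circ>\<^sub>p [:1, 1:]) - smult \<mu> q"

lemma poly_shift_diff: "poly (shift_diff \<nu> \<mu> q) x = \<nu> * poly q (x + 1) - \<mu> * poly q x"
  by (simp add: shift_diff_def poly_pcompose algebra_simps)

lemma shift_diff_add: "shift_diff \<nu> \<mu> (q1 + q2) = shift_diff \<nu> \<mu> q1 + shift_diff \<nu> \<mu> q2"
  by (simp add: shift_diff_def pcompose_add smult_add_right)

lemma exp_poly_shift_diff: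
  "exp_poly \<nu> q (Suc k) - \<mu> * exp_poly \<nu> q k = exp_poly \<nu> (shift_diff \<nu> \<mu> q) k"
  by (simp add: exp_poly_def poly_shift_diff algebra_simps)

lemma coeff_shift_diff_monom:
  "coeff (shift_diff \<nu> \<mu> (monom a j)) i = a * (\<nu> * of_nat (j choose i) - (if i = j then \<mu> else 0))"
proof -
  have "monom a j \<circ>\<^sub>p [:1, 1:] = smult a ([:1, 1:] ^ j)"
    by (rule poly_ext) (simp add: poly_pcompose poly_monom)
  moreover have "coeff ([:1, 1:] ^ j :: complex poly) i = of_nat (j choose i)"
    by (cases "i \<le> j") (simp_all add: coeff_linear_poly_power coeff_eq_0 degree_linear_power)
  ultimately show ?thesis
    by (simp add: shift_diff_def coeff_monom algebra_simps)
qed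

lemma shift_diff_top_coeff:
  assumes "\<nu> \<noteq> \<mu> \<or> \<nu> \<noteq> 0"
  obtains q where "degree (shift_diff \<nu> \<mu> q) \<le> n" "coeff (shift_diff \<nu> \<mu> q) n = c"
proof (cases "\<nu> = \<mu>")
  case False
  define q where "q = monom (c / (\<nu> - \<mu>)) n"
  have "degree (shift_diff \<nu> \<mu> q) \<le> n"
    by (rule degree_le) (simp add: q_def coeff_shift_diff_monom)
  moreover have "coeff (shift_diff \<nu> \<mu> q) n = c"
    using False by (simp add: q_def coeff_shift_diff_monom field_simps)
  ultimately show thesis by (rule that)
next
  case True
  \<comment> \<open>\<open>\<nu> (q(x + 1) - q(x))\<close> lowers the degree by one, so the monomial has degree \<open>n + 1\<close>\<close>
  with assms have "\<nu> \<noteq> 0" by simp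
  define q where "q = monom (c / (\<nu> * of_nat (Suc n))) (Suc n)"
  have "degree (shift_diff \<nu> \<mu> q) \<le> n"
    using True by (intro degree_le) (auto simp: q_def coeff_shift_diff_monom)
  moreover have "coeff (shift_diff \<nu> \<mu> q) n = c"
    using \<open>\<nu> \<noteq> 0\<close> by (simp add: q_def coeff_shift_diff_monom del: of_nat_Suc)
  ultimately show thesis by (rule that)
qed

lemma shift_diff_surj:
  assumes "\<nu> \<noteq> \<mu> \<or> \<nu> \<noteq> 0"
  shows "\<exists>q. shift_diff \<nu> \<mu> q = p"
proof (induction "degree p" arbitrary: p rule: less_induct)
  case less
  obtain q0 where q0: "degree (shift_diff \<nu> \<mu> q0) \<le> degree p"
    "coeff (shift_diff \<nu> \<mu> q0) (degree p) = lead_coeff p"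
    using shift_diff_top_coeff[OF assms] by blast
  define p' where "p' = p - shift_diff \<nu> \<mu> q0"
  have "degree p' \<le> degree p" "coeff p' (degree p) = 0"
    using q0 by (auto simp: p'_def intro: degree_diff_le)
  then have "p' = 0 \<or> degree p' < degree p"
    by (metis le_neq_implies_less leading_coeff_0_iff)
  moreover have "shift_diff \<nu> \<mu> 0 = 0" by (simp add: shift_diff_def)
  ultimately obtain q' where "shift_diff \<nu> \<mu> q' = p'"
    using less by blast
  then have "shift_diff \<nu> \<mu> (q0 + q') = p" by (simp add: shift_diff_add p'_def)
  then show ?case by blast
qed

lemma degree_shift_diff_same_less:
  assumes "0 < degree p"
  shows "degree (shift_diff \<mu> \<mu> p) < degree p"
proof -
  have "degree (p \<circ>\<^sub>p [:1, 1:] - p) \<le> degree p"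
    by (intro degree_diff_le) (simp_all add: degree_pcompose)
  moreover have "coeff (p \<circ>\<^sub>p [:1, 1:] - p) (degree p) = 0"
    using lead_coeff_comp[of "[:1, 1:]" p] by (simp add: degree_pcompose)
  ultimately have "degree (p \<circ>\<^sub>p [:1, 1:] - p) < degree p"
    using assms by (metis le_neq_implies_less leading_coeff_0_iff neq0_conv degree_0)
  then show ?thesis
    unfolding shift_diff_def smult_diff_right[symmetric] using degree_smult_le le_less_trans by blast
qed

lemma shift_diff_same_const: "degree p = 0 \<Longrightarrow> shift_diff \<mu> \<mu> p = 0"
  by (auto simp: shift_diff_def elim!: degree_eq_zeroE)

definition first_order_sol :: "complex \<Rightarrow> (nat \<Rightarrow> complex) \<Rightarrow> nat \<Rightarrow> complex" where
  "first_order_sol \<mu> e k = (\<Sum>j<k. \<mu> ^ (k - 1 - j) * e j)"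

lemma first_order_sol_Suc:
  "first_order_sol \<mu> e (Suc k) = \<mu> * first_order_sol \<mu> e k + e k"
proof -
  have "\<mu> * first_order_sol \<mu> e k = (\<Sum>j<k. \<mu> ^ (k - j) * e j)"
    unfolding first_order_sol_def sum_distrib_left
    by (intro sum.cong refl) (auto simp: Suc_diff_Suc simp flip: power_Suc)
  then show ?thesis by (simp add: first_order_sol_def)
qed

context ramanujan_space
begin

lemma small_first_order_sol:
  assumes "small e" "norm \<mu> \<le> r"
  shows "small (first_order_sol \<mu> e)"
proof (rule small_if_linear_power_bound)
  fix s assume "r < s"
  then obtain C where C: "\<And>k. norm (e k) \<le> C * s ^ k" using smallD[OF assms(1)] by blast
  have "1 \<le> s" using \<open>r < s\<close> r_ge_1 by simp
  have "norm (first_order_sol \<mu> e k) \<le> C * ((real k + 1) * s ^ k)" for k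
  proof -
    have "norm (\<mu> ^ (k - 1 - j) * e j) \<le> C * s ^ k" if "j < k" for j
    proof -
      have "norm (\<mu> ^ (k - 1 - j) * e j) \<le> s ^ (k - 1 - j) * (C * s ^ j)"
        unfolding norm_mult norm_power using assms(2) \<open>r < s\<close> C[of j] r_ge_1
        by (intro mult_mono power_mono) auto
      also have "\<dots> = C * s ^ (k - 1)"
        using that by (simp add: mult.left_commute flip: power_add)
      also have "\<dots> \<le> C * s ^ k"
        using \<open>1 \<le> s\<close> power_bound_nonneg[OF C] by (intro mult_left_mono power_increasing) auto
      finally show ?thesis .
    qed
    then have "norm (first_order_sol \<mu> e k) \<le> real k * (C * s ^ k)"
      unfolding first_order_sol_def
      using sum_norm_le[of "{..<k}" "\<lambda>j. \<mu> ^ (k - 1 - j) * e j" "\<lambda>_. C * s ^ k"] by simp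
    also have "\<dots> \<le> C * ((real k + 1) * s ^ k)"
      using power_bound_nonneg[OF C] \<open>1 \<le> s\<close> by (simp add: algebra_simps)
    finally show ?thesis .
  qed
  then show "\<exists>C. \<forall>k. norm (first_order_sol \<mu> e k) \<le> C * ((real k + 1) * s ^ k)" by blast
qed

lemma norm_div_power_Suc_le:
  fixes e :: "nat \<Rightarrow> 'a::real_normed_field"
  assumes "\<And>k. norm (e k) \<le> C * s ^ k"
  shows "norm (e j / \<mu> ^ Suc j) \<le> C / norm \<mu> * (s / norm \<mu>) ^ j"
proof -
  have "norm (e j / \<mu> ^ Suc j) = norm (e j) / norm \<mu> ^ Suc j"
    by (simp add: norm_divide norm_power del: power_Suc)
  also have "\<dots> \<le> C * s ^ j / norm \<mu> ^ Suc j"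
    using assms[of j] by (intro divide_right_mono) auto
  finally show ?thesis by (simp add: power_divide)
qed

lemma summable_div_power_Suc:
  assumes "small e" "r < norm \<mu>"
  shows "summable (\<lambda>j. e j / \<mu> ^ Suc j)"
proof -
  define s where "s = (r + norm \<mu>) / 2"
  have s: "r < s" "s < norm \<mu>" "0 \<le> s" using assms(2) r_ge_1 by (auto simp: s_def)
  then have q: "s / norm \<mu> < 1" by (simp add: divide_less_eq)
  obtain C where C: "\<And>k. norm (e k) \<le> C * s ^ k" using smallD[OF assms(1) s(1)] by blast
  have "summable (\<lambda>j. C / norm \<mu> * (s / norm \<mu>) ^ j)"
    using s q by (intro summable_mult summable_geometric) auto
  then show ?thesis
    using norm_div_power_Suc_le[OF C] by (rule summable_comparison_test'[of _ 0])
qed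

lemma small_tail_div_power_Suc:
  assumes "small e" "r < norm \<mu>"
  shows "small (\<lambda>k. \<mu> ^ k * (\<Sum>i. e (i + k) / \<mu> ^ Suc (i + k)))"
proof (rule small_if_small_near_r[OF assms(2)])
  fix s assume s: "r < s" "s < norm \<mu>"
  define M where "M = norm \<mu>"
  obtain C where C: "\<And>k. norm (e k) \<le> C * s ^ k" using smallD[OF assms(1) s(1)] by blast
  have "0 < M" using s r_ge_1 unfolding M_def by linarith
  with s have q: "0 \<le> s" "0 < M" "0 \<le> s / M" "s / M < 1" using r_ge_1 by (auto simp: M_def)
  have "norm (\<mu> ^ k * (\<Sum>i. e (i + k) / \<mu> ^ Suc (i + k))) \<le> C / (M - s) * s ^ k" for k
  proof -
    have "norm (e (i + k) / \<mu> ^ Suc (i + k)) \<le> C / M * (s / M) ^ k * (s / M) ^ i" for i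
      using norm_div_power_Suc_le[OF C, of "i + k" \<mu>] by (simp add: M_def power_add mult_ac)
    then have "norm (\<Sum>i. e (i + k) / \<mu> ^ Suc (i + k)) \<le> (\<Sum>i. C / M * (s / M) ^ k * (s / M) ^ i)"
      using q by (intro norm_suminf_le summable_mult summable_geometric) auto
    also have "\<dots> = C / M * (s / M) ^ k / (1 - s / M)"
      using q by (simp add: suminf_mult suminf_geometric summable_geometric divide_inverse)
    finally have tail: "norm (\<Sum>i. e (i + k) / \<mu> ^ Suc (i + k)) \<le> C / M * (s / M) ^ k / (1 - s / M)" .
    have "norm (\<mu> ^ k * (\<Sum>i. e (i + k) / \<mu> ^ Suc (i + k)))
        = M ^ k * norm (\<Sum>i. e (i + k) / \<mu> ^ Suc (i + k))"
      by (simp add: M_def norm_mult norm_power)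
    also have "\<dots> \<le> M ^ k * (C / M * (s / M) ^ k / (1 - s / M))"
      using tail q by (intro mult_left_mono) auto
    also have "\<dots> = C / (M - s) * s ^ k"
      using q s by (simp add: power_divide field_simps)
    finally show ?thesis .
  qed
  then show "\<exists>C. \<forall>k. norm (\<mu> ^ k * (\<Sum>i. e (i + k) / \<mu> ^ Suc (i + k))) \<le> C * s ^ k" by blast
qed

text \<open>For \<open>|\<mu>| > r\<close> the solution is \<open>c \<mu>\<^sup>k\<close> minus the tail \<open>\<mu>\<^sup>k \<Sum>\<^sub>j\<^sub>\<ge>\<^sub>k e\<^sub>j / \<mu>\<^sup>j\<^sup>+\<^sup>1\<close>,
  with \<open>c = \<Sum>\<^sub>j e\<^sub>j / \<mu>\<^sup>j\<^sup>+\<^sup>1\<close>.\<close>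
lemma ramanujan_first_order_sol_large:
  assumes "small e" "\<mu> \<in> \<Lambda>" "r < norm \<mu>"
  shows "ramanujan (first_order_sol \<mu> e)"
proof -
  define a where "a j = e j / \<mu> ^ Suc j" for j
  have "\<mu> \<noteq> 0" using assms(3) r_ge_1 by auto
  have "first_order_sol \<mu> e k = exp_poly \<mu> [:suminf a:] k + - (\<mu> ^ k * (\<Sum>i. a (i + k)))" for k
  proof -
    have "first_order_sol \<mu> e k = \<mu> ^ k * (\<Sum>j<k. a j)"
      unfolding first_order_sol_def sum_distrib_left
    proof (intro sum.cong refl)
      fix j assume "j \<in> {..<k}"
      then have "k = (k - 1 - j) + Suc j" by simp
      then have "\<mu> ^ k = \<mu> ^ (k - 1 - j) * \<mu> ^ Suc j" by (metis power_add)
      then show "\<mu> ^ (k - 1 - j) * e j = \<mu> ^ k * a j" using \<open>\<mu> \<noteq> 0\<close> by (simp add: a_def field_simps)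
    qed
    also have "(\<Sum>j<k. a j) = suminf a - (\<Sum>i. a (i + k))"
      using suminf_split_initial_segment[OF summable_div_power_Suc[OF assms(1,3)], of k]
      unfolding a_def by (simp add: algebra_simps)
    finally show ?thesis by (simp add: exp_poly_def algebra_simps)
  qed
  then have "first_order_sol \<mu> e = (\<lambda>k. exp_poly \<mu> [:suminf a:] k + - (\<mu> ^ k * (\<Sum>i. a (i + k))))"
    by (rule ext)
  moreover have "small (\<lambda>k. - (\<mu> ^ k * (\<Sum>i. a (i + k))))"
    using small_cmult[OF small_tail_div_power_Suc[OF assms(1,3)], of "-1"] by (simp add: a_def)
  then have "ramanujan (\<lambda>k. exp_poly \<mu> [:suminf a:] k + - (\<mu> ^ k * (\<Sum>i. a (i + k))))"
    by (rule ramanujan_add_small[OF ramanujan_exp_poly[OF assms(2)]])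
  ultimately show ?thesis by (simp only:)
qed

lemma ramanujan_first_order_sol:
  assumes "small e" "\<mu> \<in> \<Lambda>"
  shows "ramanujan (first_order_sol \<mu> e)"
  using assms small_first_order_sol ramanujan_first_order_sol_large ramanujan_small
  by (cases "norm \<mu> \<le> r") auto

lemma ramanujan_of_difference:
  assumes "\<mu> \<in> \<Lambda>" "ramanujan (\<lambda>k. f (Suc k) - \<mu> * f k)"
  shows "ramanujan f"
proof -
  obtain p e where pe: "small e" "p 0 = 0"
    "\<And>k. f (Suc k) - \<mu> * f k = (\<Sum>\<nu>\<in>\<Lambda>. exp_poly \<nu> (p \<nu>) k) + e k"
    using ramanujanE_zero_at_0[OF assms(2)] by metis
  \<comment> \<open>\<open>shift_diff 0 0\<close> vanishes, whence the normalisation \<open>p 0 = 0\<close>\<close>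
  have "\<exists>q. shift_diff \<nu> \<mu> q = p \<nu>" for \<nu>
    using shift_diff_surj[of \<nu> \<mu> "p \<nu>"] pe(2) by (cases "\<nu> = 0 \<and> \<mu> = 0") (auto simp: shift_diff_def)
  then obtain q where q: "\<And>\<nu>. shift_diff \<nu> \<mu> (q \<nu>) = p \<nu>" by metis
  define y where "y k = (\<Sum>\<nu>\<in>\<Lambda>. exp_poly \<nu> (q \<nu>) k) + first_order_sol \<mu> e k" for k
  have "ramanujan y"
    unfolding y_def
    by (intro ramanujan_add ramanujan_sum finite_\<Lambda> ramanujan_exp_poly ramanujan_first_order_sol pe assms)
  have "f (Suc k) - y (Suc k) = \<mu> * (f k - y k)" for k
  proof -
    have "y (Suc k) - \<mu> * y k
        = (\<Sum>\<nu>\<in>\<Lambda>. exp_poly \<nu> (q \<nu>) (Suc k) - \<mu> * exp_poly \<nu> (q \<nu>) k) + e k"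
      by (simp add: y_def first_order_sol_Suc sum_subtractf sum_distrib_left algebra_simps)
    also have "\<dots> = f (Suc k) - \<mu> * f k" by (simp add: exp_poly_shift_diff q pe(3))
    finally show ?thesis by (simp add: algebra_simps)
  qed
  then have "f k - y k = \<mu> ^ k * (f 0 - y 0)" for k
    by (induction k) simp_all
  then have "f = (\<lambda>k. y k + exp_poly \<mu> [:f 0 - y 0:] k)"
    by (auto simp: exp_poly_def algebra_simps)
  then show ?thesis
    using ramanujan_add[OF \<open>ramanujan y\<close> ramanujan_exp_poly[OF assms(1), of "[:f 0 - y 0:]"]] by simp
qed

end

section \<open>Cauchy products and dilations\<close>

definition seq_conv :: "(nat \<Rightarrow> complex) \<Rightarrow> (nat \<Rightarrow> complex) \<Rightarrow> nat \<Rightarrow> complex" where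
  "seq_conv F G k = (\<Sum>j\<le>k. F (k - j) * G j)"

lemma seq_conv_commute: "seq_conv F G = seq_conv G F"
proof
  fix k
  show "seq_conv F G k = seq_conv G F k"
    unfolding seq_conv_def
    by (rule sum.reindex_bij_witness[of _ "\<lambda>j. k - j" "\<lambda>j. k - j"]) (auto simp: mult.commute)
qed

lemma seq_conv_zero_left: "seq_conv (\<lambda>k. 0) G = (\<lambda>k. 0)"
  by (simp add: seq_conv_def fun_eq_iff)

lemma seq_conv_add_left:
  "seq_conv (\<lambda>k. F1 k + F2 k) G k = seq_conv F1 G k + seq_conv F2 G k"
  by (simp add: seq_conv_def distrib_right sum.distrib)

lemma seq_conv_sum_left:
  "seq_conv (\<lambda>k. \<Sum>i\<in>I. F i k) G k = (\<Sum>i\<in>I. seq_conv (F i) G k)"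
  unfolding seq_conv_def sum_distrib_right by (rule sum.swap)

lemma seq_conv_Suc:
  "seq_conv F G (Suc k) - \<mu> * seq_conv F G k
     = seq_conv (\<lambda>a. F (Suc a) - \<mu> * F a) G k + F 0 * G (Suc k)"
proof -
  have "seq_conv F G (Suc k) = (\<Sum>j\<le>k. F (Suc (k - j)) * G j) + F 0 * G (Suc k)"
    unfolding seq_conv_def by (simp add: Suc_diff_le)
  then show ?thesis
    by (simp add: seq_conv_def left_diff_distrib sum_subtractf sum_distrib_left mult.assoc)
qed

text \<open>In terms of generating functions, \<open>dilate m b\<^sub>0 g\<close> is \<open>\<Sum>\<^sub>b\<^sub>\<ge>\<^sub>b\<^sub>0 g(b) x\<^sup>m\<^sup>b\<close>.\<close>
definition dilate :: "nat \<Rightarrow> nat \<Rightarrow> (nat \<Rightarrow> complex) \<Rightarrow> nat \<Rightarrow> complex" where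
  "dilate m b0 g k = (if m dvd k \<and> b0 \<le> k div m then g (k div m) else 0)"

lemma seq_conv_dilate:
  assumes "0 < m"
  shows "seq_conv F (dilate m b0 g) k = (\<Sum>b | b0 \<le> b \<and> m * b \<le> k. F (k - m * b) * g b)"
proof -
  have "seq_conv F (dilate m b0 g) k
      = (\<Sum>j \<in> (\<lambda>b. m * b) ` {b. b0 \<le> b \<and> m * b \<le> k}. F (k - j) * g (j div m))"
    unfolding seq_conv_def dilate_def using assms
    by (intro sum.mono_neutral_cong_right) (auto elim!: dvdE)
  also have "\<dots> = (\<Sum>b | b0 \<le> b \<and> m * b \<le> k. F (k - m * b) * g b)"
    using assms by (subst sum.reindex) (auto simp: inj_on_def)
  finally show ?thesis .
qed

definition trunc_conv_index :: "nat \<Rightarrow> (nat \<Rightarrow> nat) \<Rightarrow> (nat \<Rightarrow> nat) \<Rightarrow> nat \<Rightarrow> (nat \<Rightarrow> nat) set" where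
  "trunc_conv_index s k0 m k =
     {kv. (\<forall>i<s. k0 i \<le> kv i) \<and> (\<forall>i\<ge>s. kv i = 0) \<and> (\<Sum>i<s. m i * kv i) = k}"

lemma trunc_conv_eq_sum_index:
  "trunc_conv s g k0 m k = (\<Sum>kv\<in>trunc_conv_index s k0 m k. \<Prod>i<s. g i (kv i))"
  unfolding trunc_conv_def trunc_conv_index_def ..

lemma finite_trunc_conv_index:
  assumes "\<forall>i<s. 0 < m i"
  shows "finite (trunc_conv_index s k0 m k)"
proof (rule finite_subset)
  show "trunc_conv_index s k0 m k
      \<subseteq> (\<lambda>f i. if i < s then f i else 0) ` (\<Pi>\<^sub>E i\<in>{..<s}. {..k})"
  proof
    fix kv assume kv: "kv \<in> trunc_conv_index s k0 m k"
    have "kv i \<le> k" if "i < s" for i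
    proof -
      have "0 < m i" using assms that by blast
      then have "kv i \<le> m i * kv i" by simp
      also have "\<dots> \<le> (\<Sum>j<s. m j * kv j)" using that by (intro member_le_sum) auto
      finally show ?thesis using kv by (simp add: trunc_conv_index_def)
    qed
    moreover have "kv = (\<lambda>i. if i < s then restrict kv {..<s} i else 0)"
      using kv by (auto simp: trunc_conv_index_def fun_eq_iff)
    ultimately show "kv \<in> (\<lambda>f i. if i < s then f i else 0) ` (\<Pi>\<^sub>E i\<in>{..<s}. {..k})"
      by (intro image_eqI[where x = "restrict kv {..<s}"]) auto
  qed
qed (simp add: finite_PiE)

lemma trunc_conv_0: "trunc_conv 0 g k0 m k = (if k = 0 then 1 else 0)"
proof -
  have "trunc_conv_index 0 k0 m k = (if k = 0 then {\<lambda>_. 0} else {})"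
    by (auto simp: trunc_conv_index_def)
  then show ?thesis by (simp add: trunc_conv_eq_sum_index)
qed

lemma trunc_conv_Suc_eq_sum:
  assumes m: "\<forall>i<Suc s. 0 < m i"
  shows "trunc_conv (Suc s) g k0 m k
    = (\<Sum>b | k0 s \<le> b \<and> m s * b \<le> k. trunc_conv s g k0 m (k - m s * b) * g s b)"
proof -
  define B where "B = {b. k0 s \<le> b \<and> m s * b \<le> k}"
  let ?I = "trunc_conv_index"
  have "B \<subseteq> {..k}"
  proof
    fix b assume "b \<in> B"
    moreover have "b \<le> m s * b" using m by (simp add: Suc_le_eq)
    ultimately show "b \<in> {..k}" unfolding B_def by (metis atMost_iff mem_Collect_eq order_trans)
  qed
  then have "finite B" by (rule finite_subset) simp
  have "(\<Sum>b\<in>B. trunc_conv s g k0 m (k - m s * b) * g s b)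
      = (\<Sum>b\<in>B. \<Sum>kv\<in>?I s k0 m (k - m s * b). (\<Prod>i<s. g i (kv i)) * g s b)"
    by (simp add: trunc_conv_eq_sum_index sum_distrib_right)
  also have "\<dots> = (\<Sum>(b, kv)\<in>(SIGMA b:B. ?I s k0 m (k - m s * b)). (\<Prod>i<s. g i (kv i)) * g s b)"
    using \<open>finite B\<close> m by (intro sum.Sigma) (auto intro: finite_trunc_conv_index)
  also have "\<dots> = (\<Sum>kv\<in>?I (Suc s) k0 m k. \<Prod>i<Suc s. g i (kv i))"
  proof (rule sum.reindex_bij_witness[of _ "\<lambda>kv. (kv s, kv(s := 0))" "\<lambda>(b, kv). kv(s := b)"])
    fix a assume "a \<in> (SIGMA b:B. ?I s k0 m (k - m s * b))"
    then obtain b kv where a: "a = (b, kv)" "b \<in> B" "kv \<in> ?I s k0 m (k - m s * b)" by auto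
    then have "kv s = 0" by (simp add: trunc_conv_index_def)
    with a show "((\<lambda>(b, kv). kv(s := b)) a s, ((\<lambda>(b, kv). kv(s := b)) a)(s := 0)) = a"
      by (auto simp: fun_eq_iff)
    have "(\<Sum>i<s. m i * (kv(s := b)) i) = (\<Sum>i<s. m i * kv i)" by (intro sum.cong) auto
    with a show "(case a of (b, kv) \<Rightarrow> kv(s := b)) \<in> ?I (Suc s) k0 m k"
      by (auto simp: trunc_conv_index_def less_Suc_eq B_def)
    have "(\<Prod>i<s. g i ((kv(s := b)) i)) = (\<Prod>i<s. g i (kv i))" by (intro prod.cong) auto
    with a show "(\<Prod>i<Suc s. g i ((case a of (b, kv) \<Rightarrow> kv(s := b)) i))
        = (case a of (b, kv) \<Rightarrow> (\<Prod>i<s. g i (kv i)) * g s b)"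
      by simp
  next
    fix kv assume kv: "kv \<in> ?I (Suc s) k0 m k"
    show "(\<lambda>(b, kv). kv(s := b)) (kv s, kv(s := 0)) = kv" by auto
    have "(\<Sum>i<s. m i * (kv(s := 0)) i) = (\<Sum>i<s. m i * kv i)" by (intro sum.cong) auto
    moreover have "(\<Sum>i<s. m i * kv i) + m s * kv s = k" using kv by (simp add: trunc_conv_index_def)
    ultimately show "(kv s, kv(s := 0)) \<in> (SIGMA b:B. ?I s k0 m (k - m s * b))"
      using kv by (auto simp: trunc_conv_index_def B_def)
  qed
  finally show ?thesis by (simp add: trunc_conv_eq_sum_index B_def)
qed

lemma trunc_conv_Suc:
  assumes "\<forall>i<Suc s. 0 < m i"
  shows "trunc_conv (Suc s) g k0 m = seq_conv (trunc_conv s g k0 m) (dilate (m s) (k0 s) (g s))"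
  using assms by (simp add: fun_eq_iff trunc_conv_Suc_eq_sum seq_conv_dilate)

context ramanujan_space
begin

lemma small_seq_conv:
  assumes "small F" "small G"
  shows "small (seq_conv F G)"
proof (rule small_if_linear_power_bound)
  fix s assume "r < s"
  obtain C1 C2 where C: "\<And>k. norm (F k) \<le> C1 * s ^ k" "\<And>k. norm (G k) \<le> C2 * s ^ k"
    using smallD[OF assms(1) \<open>r < s\<close>] smallD[OF assms(2) \<open>r < s\<close>] by metis
  have "norm (F (k - j) * G j) \<le> C1 * C2 * s ^ k" if "j \<le> k" for k j
  proof -
    have "norm (F (k - j) * G j) \<le> (C1 * s ^ (k - j)) * (C2 * s ^ j)"
      unfolding norm_mult using C power_bound_nonneg[OF C(1)] \<open>r < s\<close> r_ge_1
      by (intro mult_mono) auto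
    with that show ?thesis by (simp add: mult_ac flip: power_add)
  qed
  then have "norm (seq_conv F G k) \<le> C1 * C2 * ((real k + 1) * s ^ k)" for k
    unfolding seq_conv_def
    using sum_norm_le[of "{..k}" "\<lambda>j. F (k - j) * G j" "\<lambda>_. C1 * C2 * s ^ k"]
    by (simp add: algebra_simps)
  then show "\<exists>C. \<forall>k. norm (seq_conv F G k) \<le> C * ((real k + 1) * s ^ k)" by blast
qed

lemma ramanujan_seq_conv_exp_poly:
  assumes "\<mu> \<in> \<Lambda>" "ramanujan G"
  shows "ramanujan (seq_conv (exp_poly \<mu> p) G)"
proof (induction "degree p" arbitrary: p rule: less_induct)
  case less
  have "ramanujan (seq_conv (exp_poly \<mu> (shift_diff \<mu> \<mu> p)) G)"
  proof (cases "degree p = 0")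
    case True
    have "exp_poly \<mu> 0 = (\<lambda>k. 0)" by (simp add: exp_poly_def fun_eq_iff)
    with True show ?thesis by (simp add: shift_diff_same_const seq_conv_zero_left ramanujan_zero)
  next
    case False
    then show ?thesis using less degree_shift_diff_same_less by blast
  qed
  then have "ramanujan (\<lambda>k. seq_conv (exp_poly \<mu> (shift_diff \<mu> \<mu> p)) G k
                          + exp_poly \<mu> p 0 * G (Suc k))"
    by (intro ramanujan_add ramanujan_cmult ramanujan_shift assms)
  then have "ramanujan (\<lambda>k. seq_conv (exp_poly \<mu> p) G (Suc k) - \<mu> * seq_conv (exp_poly \<mu> p) G k)"
    by (simp add: seq_conv_Suc exp_poly_shift_diff)
  then show ?case by (rule ramanujan_of_difference[OF assms(1)])
qed

lemma ramanujan_seq_conv_small: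
  assumes "small F" "ramanujan G"
  shows "ramanujan (seq_conv F G)"
proof -
  obtain q e where qe: "small e" "\<And>k. G k = (\<Sum>\<nu>\<in>\<Lambda>. exp_poly \<nu> (q \<nu>) k) + e k"
    using assms(2) ramanujanE by metis
  have G: "G = (\<lambda>k. (\<Sum>\<nu>\<in>\<Lambda>. exp_poly \<nu> (q \<nu>) k) + e k)" using qe(2) by (rule ext)
  have "seq_conv F G = (\<lambda>k. (\<Sum>\<nu>\<in>\<Lambda>. seq_conv (exp_poly \<nu> (q \<nu>)) F k) + seq_conv e F k)"
    unfolding seq_conv_commute[of F] G by (simp add: fun_eq_iff seq_conv_add_left seq_conv_sum_left)
  moreover have "ramanujan \<dots>"
    using assms by (intro ramanujan_add_small ramanujan_sum finite_\<Lambda> ramanujan_seq_conv_exp_poly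
        ramanujan_small small_seq_conv qe)
  ultimately show ?thesis by simp
qed

lemma ramanujan_seq_conv:
  assumes "ramanujan F" "ramanujan G"
  shows "ramanujan (seq_conv F G)"
proof -
  obtain p e where pe: "small e" "\<And>k. F k = (\<Sum>\<mu>\<in>\<Lambda>. exp_poly \<mu> (p \<mu>) k) + e k"
    using assms(1) ramanujanE by metis
  have F: "F = (\<lambda>k. (\<Sum>\<mu>\<in>\<Lambda>. exp_poly \<mu> (p \<mu>) k) + e k)" using pe(2) by (rule ext)
  have "seq_conv F G = (\<lambda>k. (\<Sum>\<mu>\<in>\<Lambda>. seq_conv (exp_poly \<mu> (p \<mu>)) G k) + seq_conv e G k)"
    unfolding F by (simp add: fun_eq_iff seq_conv_add_left seq_conv_sum_left)
  moreover have "ramanujan \<dots>"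
    using assms by (intro ramanujan_add ramanujan_sum finite_\<Lambda> ramanujan_seq_conv_exp_poly
        ramanujan_seq_conv_small pe)
  ultimately show ?thesis by simp
qed

lemma ramanujan_dilate:
  assumes "ramanujan g" "0 < m"
  shows "ramanujan (dilate m b0 g)"
proof (cases "m = 1")
  case True
  have "small (\<lambda>k. - (if k < b0 then g k else 0))"
    by (rule small_finite_support[of b0]) auto
  then have "ramanujan (\<lambda>k. g k + - (if k < b0 then g k else 0))"
    by (rule ramanujan_add_small[OF assms(1)])
  moreover have "dilate m b0 g = (\<lambda>k. g k + - (if k < b0 then g k else 0))"
    using True by (auto simp: dilate_def fun_eq_iff)
  ultimately show ?thesis by simp
next
  case False
  \<comment> \<open>\<open>g(b) = O(s\<^sup>2\<^sup>b)\<close> for every \<open>s > r \<ge> 1\<close>, and \<open>s\<^sup>2\<^sup>b \<le> s\<^sup>m\<^sup>b\<close> once \<open>m \<ge> 2\<close>\<close>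
  with assms(2) have "2 \<le> m" by simp
  have "small (dilate m b0 g)"
    unfolding small_def
  proof (intro allI impI)
    fix s assume "r < s"
    then have "1 \<le> s" using r_ge_1 by simp
    obtain C where C: "\<And>b. norm (g b) \<le> C * (s\<^sup>2) ^ b"
      using ramanujan_power_bound[OF assms(1) \<open>r < s\<close>] by metis
    have "norm (dilate m b0 g k) \<le> C * s ^ k" for k
    proof (cases "m dvd k \<and> b0 \<le> k div m")
      case True
      have "(s\<^sup>2) ^ (k div m) \<le> s ^ (m * (k div m))"
        unfolding power_mult[symmetric] using \<open>1 \<le> s\<close> \<open>2 \<le> m\<close> by (intro power_increasing) auto
      also have "m * (k div m) = k" using True by simp
      finally show ?thesis
        using True C[of "k div m"] power_bound_nonneg[OF C]
        by (auto simp: dilate_def intro: order_trans mult_left_mono)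
    next
      case False
      then show ?thesis using power_bound_nonneg[OF C] \<open>1 \<le> s\<close> by (auto simp: dilate_def)
    qed
    then show "\<exists>C. \<forall>k. norm (dilate m b0 g k) \<le> C * s ^ k" by blast
  qed
  then show ?thesis by (rule ramanujan_small)
qed

lemma ramanujan_trunc_conv:
  assumes "\<forall>i<s. 0 < m i" "\<forall>i<s. ramanujan (g i)"
  shows "ramanujan (trunc_conv s g k0 m)"
  using assms
proof (induction s)
  case 0
  have "small (trunc_conv 0 g k0 m)"
    by (rule small_finite_support[of 1]) (simp add: trunc_conv_0)
  then show ?case by (rule ramanujan_small)
next
  case (Suc s)
  then show ?case by (simp add: trunc_conv_Suc ramanujan_seq_conv ramanujan_dilate)
qed

end

section \<open>The spectrum of the Hashimoto matrix\<close>

lemma eigenvector_combination_eq_0: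
  fixes A :: "complex^'n^'n"
  assumes "finite S" "\<And>\<mu>. \<mu> \<in> S \<Longrightarrow> V \<mu> \<noteq> 0 \<and> A *v V \<mu> = \<mu> *s V \<mu>"
    and "(\<Sum>\<mu>\<in>S. c \<mu> *s V \<mu>) = 0"
  shows "\<forall>\<mu>\<in>S. c \<mu> = 0"
  using assms
proof (induction S arbitrary: c rule: finite_induct)
  case empty
  then show ?case by simp
next
  case (insert l S)
  define x where "x = (\<Sum>\<mu>\<in>insert l S. c \<mu> *s V \<mu>)"
  have "A *v x - l *s x = (\<Sum>\<mu>\<in>insert l S. (c \<mu> * (\<mu> - l)) *s V \<mu>)"
    unfolding x_def using insert.prems(1)
    by (simp add: vec.sum vec.scale vec.scale_sum_right vector_smult_assoc sum_subtractf[symmetric]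
        vec.scale_right_diff_distrib mult.commute del: sum.insert)
       (simp add: algebra_simps vec.scale_left_diff_distrib)
  also have "\<dots> = (\<Sum>\<mu>\<in>S. (c \<mu> * (\<mu> - l)) *s V \<mu>)"
    using insert.hyps by simp
  finally have "\<forall>\<mu>\<in>S. c \<mu> * (\<mu> - l) = 0"
    using insert.IH[of "\<lambda>\<mu>. c \<mu> * (\<mu> - l)"] insert.prems(1,2) by (simp add: x_def)
  then have "\<forall>\<mu>\<in>S. c \<mu> = 0" using insert.hyps(2) by auto
  moreover from this have "c l = 0" using insert.prems(1,2) insert.hyps by simp
  ultimately show ?case by simp
qed

lemma finite_mat_spectrum: "finite (mat_spectrum (A :: complex^'n^'n))"
proof (rule ccontr)
  assume "infinite (mat_spectrum A)"
  then obtain S where S: "finite S" "card S = CARD('n) + 1" "S \<subseteq> mat_spectrum A"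
    using infinite_arbitrarily_large by blast
  obtain V where V: "\<And>\<mu>. \<mu> \<in> S \<Longrightarrow> V \<mu> \<noteq> 0 \<and> A *v V \<mu> = \<mu> *s V \<mu>"
    using S(3) unfolding mat_spectrum_def subset_iff mem_Collect_eq by metis
  have "inj_on V S"
  proof
    fix x y assume xy: "x \<in> S" "y \<in> S" "V x = V y"
    then have "x *s V x = y *s V x" using V by metis
    then have "(x - y) *s V x = 0" by (simp add: vec.scale_left_diff_distrib)
    then show "x = y" using V[OF xy(1)] by simp
  qed
  have "vec.independent (V ` S)"
    unfolding vec.independent_explicit
  proof (intro conjI allI impI ballI)
    show "finite (V ` S)" using S(1) by simp
  next
    fix c v assume c: "(\<Sum>v\<in>V ` S. c v *s v) = 0" and "v \<in> V ` S"
    have "(\<Sum>\<mu>\<in>S. c (V \<mu>) *s V \<mu>) = 0"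
      using c sum.reindex[OF \<open>inj_on V S\<close>, of "\<lambda>v. c v *s v"] by simp
    then have "\<forall>\<mu>\<in>S. c (V \<mu>) = 0"
      using eigenvector_combination_eq_0[OF S(1) V, where c = "\<lambda>\<mu>. c (V \<mu>)"] by blast
    then show "c v = 0" using \<open>v \<in> V ` S\<close> by auto
  qed
  then have "card (V ` S) \<le> CARD('n)"
    using vec.independent_bound_general dim_subset_UNIV_cart_gen order_trans by blast
  then show False using card_image[OF \<open>inj_on V S\<close>] S(2) by simp
qed

lemma norm_le_spectral_rad:
  "\<mu> \<in> mat_spectrum (A :: complex^'n^'n) \<Longrightarrow> norm \<mu> \<le> spectral_rad A"
  unfolding spectral_rad_def using finite_mat_spectrum[of A] by (intro Max_ge) auto

lemma exists_orientation:
  fixes rv :: "'d::finite \<Rightarrow> 'd"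
  assumes rv_rv: "\<And>e. rv (rv e) = e" and no_fix: "\<And>e. rv e \<noteq> e"
  obtains R where "\<And>e. rv e \<in> R \<longleftrightarrow> e \<notin> R" "CARD('d) = 2 * card R"
proof -
  obtain \<iota> :: "'d \<Rightarrow> nat" where "inj \<iota>" using countable_class.ex_inj by blast
  define R where "R = {e. \<iota> e < \<iota> (rv e)}"
  have neq: "\<iota> e \<noteq> \<iota> (rv e)" for e using no_fix \<open>inj \<iota>\<close> by (metis injD)
  have R: "rv e \<in> R \<longleftrightarrow> e \<notin> R" for e
    unfolding R_def using rv_rv[of e] neq[of e] by auto
  have "inj rv" using rv_rv by (metis injI)
  have "UNIV = R \<union> rv ` R" using R rv_rv by (metis UnCI image_eqI subsetI subset_antisym top_greatest)
  moreover have "R \<inter> rv ` R = {}" using R by auto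
  ultimately have "CARD('d) = card R + card (rv ` R)" by (metis card_Un_disjoint finite)
  also have "card (rv ` R) = card R" using \<open>inj rv\<close> by (simp add: card_image inj_on_subset)
  finally show thesis by (intro that[of R] R) simp
qed

lemma exists_balanced_flow_on:
  fixes tail head :: "'d::finite \<Rightarrow> 'v::finite" and R :: "'d set"
  assumes "CARD('v) < card R"
  obtains u :: "complex^'d" where "u \<noteq> 0" "\<And>e. e \<notin> R \<Longrightarrow> u $ e = 0"
    "\<And>v. (\<Sum>e | tail e = v. u $ e) = (\<Sum>e | head e = v. u $ e)"
proof -
  \<comment> \<open>the incidence map on vectors supported on \<open>R\<close> goes to a space of smaller dimension\<close>
  define U where "U = {x :: complex^'d. \<forall>e. e \<notin> R \<longrightarrow> x $ e = 0}"
  define M :: "complex^'d^'v" where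
    "M = (\<chi> v e. (if tail e = v then 1 else 0) - (if head e = v then 1 else 0))"
  have "vec.subspace U" by (simp add: vec.subspace_def U_def)
  have "\<not> inj_on ((*v) M) (vec.span U)"
  proof
    assume "inj_on ((*v) M) (vec.span U)"
    then have "vec.dim ((*v) M ` U) = vec.dim U"
      by (rule vec.dim_image_eq[OF matrix_vector_mul_linear_gen])
    also have "vec.dim U = card R" unfolding U_def by (rule dim_substandard_cart)
    finally show False
      using dim_subset_UNIV_cart_gen[of "(*v) M ` U"] assms by simp
  qed
  then obtain x y where "x \<in> U" "y \<in> U" "x \<noteq> y" "M *v x = M *v y"
    using vec.span_eq_iff[THEN iffD2, OF \<open>vec.subspace U\<close>] unfolding inj_on_def by blast
  define u where "u = x - y"
  have "u \<in> U" "u \<noteq> 0" "M *v u = 0"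
    using \<open>x \<in> U\<close> \<open>y \<in> U\<close> \<open>x \<noteq> y\<close> \<open>M *v x = M *v y\<close>
    by (auto simp: u_def U_def vec.diff)
  have "(\<Sum>e | tail e = v. u $ e) - (\<Sum>e | head e = v. u $ e) = (M *v u) $ v" for v
  proof -
    have "(\<Sum>e | tail e = v. u $ e) - (\<Sum>e | head e = v. u $ e)
        = (\<Sum>e\<in>UNIV. (if tail e = v then u $ e else 0) - (if head e = v then u $ e else 0))"
      by (simp add: sum_subtractf sum.If_cases)
    also have "\<dots> = (M *v u) $ v"
      by (auto simp: M_def matrix_vector_mult_def intro!: sum.cong)
    finally show ?thesis .
  qed
  with \<open>u \<in> U\<close> \<open>u \<noteq> 0\<close> \<open>M *v u = 0\<close> show thesis
    by (intro that[of u]) (auto simp: U_def)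
qed

lemma exists_circulation:
  fixes tail head :: "'d::finite \<Rightarrow> 'v::finite"
  assumes "graph tail head rv" "no_half_loops rv" "graph_order tail > 0"
  obtains w :: "complex^'d"
    where "w \<noteq> 0" "\<And>e. w $ rv e = - w $ e" "\<And>v. (\<Sum>e | tail e = v. w $ e) = 0"
proof -
  have rv_rv: "rv (rv e) = e" and tail_rv: "tail (rv e) = head e" for e
    using assms(1) by (auto simp: graph_def)
  have head_rv: "head (rv e) = tail e" for e
    using tail_rv[of "rv e"] rv_rv[of e] by simp
  obtain R where R: "\<And>e. rv e \<in> R \<longleftrightarrow> e \<notin> R" "CARD('d) = 2 * card R"
    using exists_orientation[of rv] rv_rv assms(2) unfolding no_half_loops_def by metis
  then have "CARD('v) < card R" using assms(3) by (simp add: graph_order_def)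
  then obtain u :: "complex^'d" where u: "u \<noteq> 0" "\<And>e. e \<notin> R \<Longrightarrow> u $ e = 0"
    "\<And>v. (\<Sum>e | tail e = v. u $ e) = (\<Sum>e | head e = v. u $ e)"
    using exists_balanced_flow_on[of R tail head] by metis
  define w where "w = (\<chi> e. u $ e - u $ rv e)"
  show thesis
  proof
    obtain e where "u $ e \<noteq> 0" using \<open>u \<noteq> 0\<close> by (metis vec_eq_iff zero_index)
    with u(2) have "u $ rv e = 0" using R(1) by blast
    with \<open>u $ e \<noteq> 0\<close> show "w \<noteq> 0" by (metis w_def vec_lambda_beta zero_index diff_0_right)
  next
    show "w $ rv e = - w $ e" for e by (simp add: w_def rv_rv)
  next
    fix v
    have "(\<Sum>e | tail e = v. u $ rv e) = (\<Sum>e | head e = v. u $ e)"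
      by (rule sum.reindex_bij_witness[of _ rv rv]) (auto simp: rv_rv head_rv tail_rv)
    then show "(\<Sum>e | tail e = v. w $ e) = 0"
      by (simp add: w_def sum_subtractf u(3))
  qed
qed

lemma hashimoto_circulation:
  assumes "graph tail head rv" "\<And>e. w $ rv e = - w $ e" "\<And>v. (\<Sum>e | tail e = v. w $ e) = 0"
  shows "hashimoto tail head rv *v w = w"
proof (subst vec_eq_iff, intro allI)
  fix e
  have "tail (rv e) = head e" using assms(1) by (simp add: graph_def)
  have "(hashimoto tail head rv *v w) $ e = (\<Sum>e'\<in>UNIV. if tail e' = head e \<and> e' \<noteq> rv e then w $ e' else 0)"
    by (auto simp: hashimoto_def matrix_vector_mult_def intro!: sum.cong)
  also have "\<dots> = (\<Sum>e' \<in> {e'. tail e' = head e} - {rv e}. w $ e')"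
    by (simp add: sum.inter_filter[symmetric] set_diff_eq conj_commute)
  also have "\<dots> = (\<Sum>e' | tail e' = head e. w $ e') - w $ rv e"
    using \<open>tail (rv e) = head e\<close> by (simp add: sum_diff1)
  also have "\<dots> = w $ e" using assms(2,3) by simp
  finally show "(hashimoto tail head rv *v w) $ e = w $ e" .
qed

lemma one_in_spectrum_hashimoto:
  fixes tail head :: "'d::finite \<Rightarrow> 'v::finite"
  assumes "graph tail head rv" "no_half_loops rv" "graph_order tail > 0"
  shows "1 \<in> mat_spectrum (hashimoto tail head rv)"
proof -
  obtain w :: "complex^'d"
    where "w \<noteq> 0" "\<And>e. w $ rv e = - w $ e" "\<And>v. (\<Sum>e | tail e = v. w $ e) = 0"
    using exists_circulation[OF assms] by blast
  then show ?thesis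
    using hashimoto_circulation[OF assms(1)] unfolding mat_spectrum_def by auto
qed

section \<open>\<open>B\<close>-Ramanujan functions\<close>

locale nonbacktracking_spectrum =
  fixes tail head :: "'d::finite \<Rightarrow> 'v::finite" and rv :: "'d \<Rightarrow> 'd"
  assumes graph: "graph tail head rv" and no_half_loops: "no_half_loops rv"
    and order_pos: "graph_order tail > 0"
begin

abbreviation "H \<equiv> hashimoto tail head rv"

lemma spectral_rad_ge_1: "1 \<le> spectral_rad H"
  using norm_le_spectral_rad[OF one_in_spectrum_hashimoto[OF graph no_half_loops order_pos]] by simp

sublocale ramanujan_space "mat_spectrum H" "sqrt (spectral_rad H)"
  using spectral_rad_ge_1 by unfold_locales (auto simp: finite_mat_spectrum norm_le_spectral_rad)

lemma B_ramanujan_iff_ramanujan: "B_ramanujan tail head rv P \<longleftrightarrow> ramanujan P"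
  using spectral_rad_ge_1
  by (simp add: B_ramanujan_def ramanujan_def small_iff_powr_bound exp_poly_def Let_def conj_commute)

end

theorem theorem2p18:
  fixes tail head :: "'d::finite \<Rightarrow> 'v::finite" and rv :: "'d \<Rightarrow> 'd"
    and s :: nat and m k0 :: "nat \<Rightarrow> nat" and g :: "nat \<Rightarrow> nat \<Rightarrow> complex"
  assumes "graph tail head rv" and "no_half_loops rv" and "connected_graph tail head"
    and "graph_order tail > 0"
    and "s \<ge> 1"
    and "\<forall>i<s. m i > 0 \<and> k0 i > 0"
    and "\<forall>i<s. B_ramanujan tail head rv (g i)"
  shows "B_ramanujan tail head rv (trunc_conv s g k0 m)"
proof -
  interpret nonbacktracking_spectrum tail head rv
    using assms(1,2,4) by unfold_locales
  show ?thesis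
    using assms(6,7) by (simp add: B_ramanujan_iff_ramanujan ramanujan_trunc_conv)
qed

end
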